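(* Let $d\ge 1$ and let $\mathbf{X}$ and $\mathbf{Y}$ be $d$-dimensional random vectors. If $\mathbb{E}\, u(\mathbf{X}) > \mathbb{E}\, u(\mathbf{Y})$ for every $u \in \mathcal{U}$, then $\mathbf{X} \succ_{d} \mathbf{Y}$.
   Context: For $\mathbf{x},\mathbf{y}\in\mathbb{R}^d$ write $\mathbf{y}\preceq_p \mathbf{x}$ if $y_i\le x_i$ for all $i$, and say $\mathbf{x}$ Pareto dominates $\mathbf{y}$, written $\mathbf{x}\succ_p\mathbf{y}$, if $x_i\ge y_i$ for all $i$ and $x_i>y_i$ for some $i$. $\mathcal{U}$ denotes the class of strictly monotonically increasing functions $u:\mathbb{R}^d\to\mathbb{R}$, i.e. $\mathbf{x}\succ_p\mathbf{y}\implies u(\mathbf{x})>u(\mathbf{y})$. The CDF of a random vector $\mathbf{X}$ is $F_{\mathbf{X}}(\mathbf{x})=P(\mathbf{X}\preceq_p\mathbf{x})$. First-order stochastic dominance: $\mathbf{X}\succeq_{\mathrm{FSD}}\mathbf{Y}$ iff $F_{\mathbf{X}}(\mathbf{v})\le F_{\mathbf{Y}}(\mathbf{v})$ for all $\mathbf{v}\in\mathbb{R}^d$; strict first-order stochastic dominance $\mathbf{X}\succ_{\mathrm{FSD}}\mathbf{Y}$ means $\mathbf{X}\succeq_{\mathrm{FSD}}\mathbf{Y}$ and $F_{\mathbf{X}}(\mathbf{v})< F_{\mathbf{Y}}(\mathbf{v})$ for some $\mathbf{v}$ (the same definitions apply to real random variables, $d=1$). Distributional dominance: $\mathbf{X}\succ_{d}\mathbf{Y}$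 iff $\mathbf{X}\succeq_{\mathrm{FSD}}\mathbf{Y}$ and there is $i\in\{1,\dots,d\}$ such that the marginal $X_i$ strictly first-order stochastically dominates the marginal $Y_i$, $X_i\succ_{\mathrm{FSD}}Y_i$. All expectations appearing are assumed to exist. *)

theory Defs
  imports "HOL-Probability.Probability"
begin

definition pareto_le :: "real^'d \<Rightarrow> real^'d \<Rightarrow> bool" where
  "pareto_le y x \<longleftrightarrow> (\<forall>i. y $ i \<le> x $ i)"

definition pareto_dom :: "real^'d \<Rightarrow> real^'d \<Rightarrow> bool" where
  "pareto_dom x y \<longleftrightarrow> (\<forall>i. x $ i \<ge> y $ i) \<and> (\<exists>i. x $ i > y $ i)"

text \<open>The class U of strictly monotonically increasing functions.\<close>
definition strictly_incr :: "(real^'d \<Rightarrow> real) \<Rightarrow> bool" where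
  "strictly_incr u \<longleftrightarrow> (\<forall>x y. pareto_dom x y \<longrightarrow> u x > u y)"

definition vcdf :: "'a measure \<Rightarrow> ('a \<Rightarrow> real^'d) \<Rightarrow> real^'d \<Rightarrow> real" where
  "vcdf M X v = measure M {\<omega> \<in> space M. pareto_le (X \<omega>) v}"

definition rcdf :: "'a measure \<Rightarrow> ('a \<Rightarrow> real) \<Rightarrow> real \<Rightarrow> real" where
  "rcdf M Z t = measure M {\<omega> \<in> space M. Z \<omega> \<le> t}"

definition fsd_vec :: "'a measure \<Rightarrow> ('a \<Rightarrow> real^'d) \<Rightarrow> 'b measure \<Rightarrow> ('b \<Rightarrow> real^'d) \<Rightarrow> bool" where
  "fsd_vec M X N Y \<longleftrightarrow> (\<forall>v. vcdf M X v \<le> vcdf N Y v)"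

definition strict_fsd_real :: "'a measure \<Rightarrow> ('a \<Rightarrow> real) \<Rightarrow> 'b measure \<Rightarrow> ('b \<Rightarrow> real) \<Rightarrow> bool" where
  "strict_fsd_real M X N Y \<longleftrightarrow> (\<forall>t. rcdf M X t \<le> rcdf N Y t) \<and> (\<exists>t. rcdf M X t < rcdf N Y t)"

text \<open>Distributional dominance X \<succ>_d Y.\<close>
definition dist_dom :: "'a measure \<Rightarrow> ('a \<Rightarrow> real^'d) \<Rightarrow> 'b measure \<Rightarrow> ('b \<Rightarrow> real^'d) \<Rightarrow> bool" where
  "dist_dom M X N Y \<longleftrightarrow> fsd_vec M X N Y \<and>
     (\<exists>i. strict_fsd_real M (\<lambda>\<omega>. X \<omega> $ i) N (\<lambda>\<omega>. Y \<omega> $ i))"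

end

theory Submission
  imports Defs
begin

text \<open>The bounded function \<open>g x = (\<Sum>i. arctan x\<^sub>i)\<close> is strictly increasing, so for every integrable
  weakly increasing \<open>h\<close> and \<open>e > 0\<close> the utility \<open>h + e g\<close> lies in \<open>\<U>\<close>; letting \<open>e \<rightarrow> 0\<close> gives
  \<open>E h(X) \<ge> E h(Y)\<close>. Taking \<open>h\<close> the negated indicator of a lower orthant or of a half-space
  \<open>{x. x\<^sub>i \<le> t}\<close> yields the (marginal) CDF inequalities. Finally \<open>E g(X) > E g(Y)\<close> forces
  \<open>E arctan X\<^sub>i > E arctan Y\<^sub>i\<close> for some \<open>i\<close>, so the marginals \<open>X\<^sub>i\<close> and \<open>Y\<^sub>i\<close> have different
  distributions and their CDFs differ somewhere.\<close>

lemma borel_measurable_vec_nth [measurable (raw)]: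
  fixes f :: "'a \<Rightarrow> 'b::real_normed_vector^'n"
  assumes "f \<in> borel_measurable M"
  shows "(\<lambda>x. f x $ i) \<in> borel_measurable M"
proof -
  have "(\<lambda>x::'b^'n. x $ i) \<in> borel_measurable borel"
    by (intro borel_measurable_continuous_onI continuous_on_component continuous_on_id)
  from measurable_compose[OF assms this] show ?thesis .
qed

definition arctan_sum :: "real^'d \<Rightarrow> real" where
  "arctan_sum x = (\<Sum>i\<in>UNIV. arctan (x $ i))"

lemma strictly_incr_arctan_sum: "strictly_incr arctan_sum"
  unfolding strictly_incr_def
proof (intro allI impI)
  fix x y :: "real^'d"
  assume "pareto_dom x y"
  then obtain j where "\<And>i. y $ i \<le> x $ i" and "y $ j < x $ j"
    unfolding pareto_dom_def by auto
  then show "arctan_sum y < arctan_sum x"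
    unfolding arctan_sum_def
    by (intro sum_strict_mono_ex1) (auto simp: arctan_le_iff arctan_less_iff)
qed

lemma borel_measurable_arctan_sum [measurable]: "arctan_sum \<in> borel_measurable borel"
  unfolding arctan_sum_def by measurable

lemma abs_arctan_le_pi: "\<bar>arctan y\<bar> \<le> pi"
  using arctan_bounded[of y] pi_gt_zero by linarith

lemma abs_arctan_sum_le: "\<bar>arctan_sum (x :: real^'d)\<bar> \<le> CARD('d) * pi"
proof -
  have "\<bar>arctan_sum x\<bar> \<le> (\<Sum>i\<in>(UNIV :: 'd set). \<bar>arctan (x $ i)\<bar>)"
    unfolding arctan_sum_def by (rule sum_abs)
  also have "\<dots> \<le> (\<Sum>i\<in>(UNIV :: 'd set). pi)"
    by (intro sum_mono abs_arctan_le_pi)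
  finally show ?thesis by simp
qed

lemma le_of_perturbed_less:
  fixes a b c d :: real
  assumes "\<And>e. 0 < e \<Longrightarrow> b + e * d < a + e * c"
  shows "b \<le> a"
proof (rule ccontr)
  assume "\<not> b \<le> a"
  define e where "e = (b - a) / (\<bar>d - c\<bar> + 1)"
  have "0 < e" using \<open>\<not> b \<le> a\<close> by (simp add: e_def)
  have "e * \<bar>d - c\<bar> < b - a"
  proof -
    have "e * \<bar>d - c\<bar> = (b - a) * (\<bar>d - c\<bar> / (\<bar>d - c\<bar> + 1))" by (simp add: e_def)
    also have "\<dots> < (b - a) * 1"
      using \<open>\<not> b \<le> a\<close> by (intro mult_strict_left_mono) auto
    finally show ?thesis by simp
  qed
  moreover have "e * (c - d) \<le> e * \<bar>d - c\<bar>"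
    using \<open>0 < e\<close> by (intro mult_left_mono) auto
  ultimately show False
    using assms[OF \<open>0 < e\<close>] by (simp add: algebra_simps)
qed

lemma (in finite_measure) integrable_bounded_comp:
  fixes f :: "'b::topological_space \<Rightarrow> real"
  assumes "f \<in> borel_measurable borel" and "\<And>x. \<bar>f x\<bar> \<le> B" and "Z \<in> borel_measurable M"
  shows "integrable M (\<lambda>\<omega>. f (Z \<omega>))"
  using assms by (intro integrable_const_bound[where B=B]) auto

lemma (in finite_measure) integral_indicator_comp:
  assumes "X \<in> borel_measurable M" and "A \<in> sets borel"
  shows "(\<integral>\<omega>. indicator A (X \<omega>) \<partial>M) = measure M {\<omega>\<in>space M. X \<omega> \<in> A}"
proof -
  have "(\<integral>\<omega>. indicator A (X \<omega>) \<partial>M :: real) = (\<integral>\<omega>. indicator {\<omega>\<in>space M. X \<omega> \<in> A} \<omega> \<partial>M)"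
    by (intro Bochner_Integration.integral_cong) (auto split: split_indicator)
  also have "\<dots> = measure M {\<omega>\<in>space M. X \<omega> \<in> A}"
    by (simp add: Int_absorb2 subset_eq)
  finally show ?thesis .
qed

lemma distr_eq_of_rcdf_eq:
  assumes "prob_space M" and "prob_space N"
    and [measurable]: "Z \<in> borel_measurable M" "W \<in> borel_measurable N"
    and "\<And>t. rcdf M Z t = rcdf N W t"
  shows "distr M borel Z = distr N borel W"
proof (rule cdf_unique)
  show "real_distribution (distr M borel Z)" "real_distribution (distr N borel W)"
    using assms(1,2) by (auto intro: prob_space.real_distribution_distr)
  have "cdf (distr M borel Z) t = rcdf M Z t" for t
    by (simp add: cdf_def rcdf_def measure_distr vimage_def Int_def conj_commute)
  moreover have "cdf (distr N borel W) t = rcdf N W t" for t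
    by (simp add: cdf_def rcdf_def measure_distr vimage_def Int_def conj_commute)
  ultimately show "cdf (distr M borel Z) = cdf (distr N borel W)"
    using assms(5) by auto
qed

lemma strict_fsd_realI:
  fixes f :: "real \<Rightarrow> real"
  assumes "prob_space M" and "prob_space N"
    and [measurable]: "Z \<in> borel_measurable M" "W \<in> borel_measurable N" "f \<in> borel_measurable borel"
    and le: "\<And>t. rcdf M Z t \<le> rcdf N W t"
    and "(\<integral>\<omega>. f (Z \<omega>) \<partial>M) \<noteq> (\<integral>\<omega>. f (W \<omega>) \<partial>N)"
  shows "strict_fsd_real M Z N W"
  unfolding strict_fsd_real_def
proof (intro conjI allI le)
  show "\<exists>t. rcdf M Z t < rcdf N W t"
  proof (rule ccontr)
    assume "\<nexists>t. rcdf M Z t < rcdf N W t"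
    then have "rcdf M Z t = rcdf N W t" for t
      using le[of t] by (meson order_less_le)
    then have "distr M borel Z = distr N borel W"
      by (intro distr_eq_of_rcdf_eq assms(1-4))
    then have "(\<integral>x. f x \<partial>distr M borel Z) = (\<integral>x. f x \<partial>distr N borel W)" by simp
    with assms(7) show False by (simp add: integral_distr[OF assms(3,5)] integral_distr[OF assms(4,5)])
  qed
qed

definition pareto_down_closed :: "(real^'d) set \<Rightarrow> bool" where
  "pareto_down_closed S \<longleftrightarrow> (\<forall>x y. pareto_dom x y \<longrightarrow> x \<in> S \<longrightarrow> y \<in> S)"

lemma pareto_down_closed_orthant: "pareto_down_closed {x. pareto_le x v}"
  unfolding pareto_down_closed_def pareto_dom_def pareto_le_def by (auto intro: order_trans)

lemma pareto_down_closed_halfspace: "pareto_down_closed {x. x $ i \<le> t}"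
  unfolding pareto_down_closed_def pareto_dom_def by (auto intro: order_trans)

locale expected_utility_dominance =
  M: prob_space M + N: prob_space N
  for M :: "'a measure" and N :: "'b measure" and X :: "'a \<Rightarrow> real^'d" and Y :: "'b \<Rightarrow> real^'d" +
  assumes X_measurable [measurable]: "X \<in> borel_measurable M"
    and Y_measurable [measurable]: "Y \<in> borel_measurable N"
    and expectation_less: "\<And>u. strictly_incr u \<Longrightarrow> integrable M (\<lambda>\<omega>. u (X \<omega>)) \<Longrightarrow>
      integrable N (\<lambda>\<omega>. u (Y \<omega>)) \<Longrightarrow> (\<integral>\<omega>. u (X \<omega>) \<partial>M) > (\<integral>\<omega>. u (Y \<omega>) \<partial>N)"
begin

lemma measurable_component [measurable]:
  "(\<lambda>\<omega>. X \<omega> $ i) \<in> borel_measurable M" "(\<lambda>\<omega>. Y \<omega> $ i) \<in> borel_measurable N"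
  by measurable

lemma integrable_arctan_sum:
  "integrable M (\<lambda>\<omega>. arctan_sum (X \<omega>))" "integrable N (\<lambda>\<omega>. arctan_sum (Y \<omega>))"
  using M.integrable_bounded_comp[OF borel_measurable_arctan_sum abs_arctan_sum_le X_measurable]
    N.integrable_bounded_comp[OF borel_measurable_arctan_sum abs_arctan_sum_le Y_measurable] .

lemma integral_le_of_monotone:
  fixes h :: "real^'d \<Rightarrow> real"
  assumes hX: "integrable M (\<lambda>\<omega>. h (X \<omega>))" and hY: "integrable N (\<lambda>\<omega>. h (Y \<omega>))"
    and mono: "\<And>x y. pareto_dom x y \<Longrightarrow> h y \<le> h x"
  shows "(\<integral>\<omega>. h (Y \<omega>) \<partial>N) \<le> (\<integral>\<omega>. h (X \<omega>) \<partial>M)"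
proof (rule le_of_perturbed_less)
  fix e :: real
  assume "0 < e"
  define u where "u x = h x + e * arctan_sum x" for x
  have "strictly_incr u"
    using strictly_incr_arctan_sum mono \<open>0 < e\<close>
    unfolding strictly_incr_def u_def by (smt (verit) mult_strict_left_mono)
  then have "(\<integral>\<omega>. u (Y \<omega>) \<partial>N) < (\<integral>\<omega>. u (X \<omega>) \<partial>M)"
    by (rule expectation_less) (use hX hY integrable_arctan_sum in \<open>simp_all add: u_def\<close>)
  then show "(\<integral>\<omega>. h (Y \<omega>) \<partial>N) + e * (\<integral>\<omega>. arctan_sum (Y \<omega>) \<partial>N)
      < (\<integral>\<omega>. h (X \<omega>) \<partial>M) + e * (\<integral>\<omega>. arctan_sum (X \<omega>) \<partial>M)"
    using hX hY integrable_arctan_sum by (simp add: u_def)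
qed

lemma prob_le_of_down_closed:
  assumes [measurable]: "S \<in> sets borel" and "pareto_down_closed S"
  shows "measure M {\<omega>\<in>space M. X \<omega> \<in> S} \<le> measure N {\<omega>\<in>space N. Y \<omega> \<in> S}"
proof -
  have "integrable M (\<lambda>\<omega>. indicator S (X \<omega>) :: real)" "integrable N (\<lambda>\<omega>. indicator S (Y \<omega>) :: real)"
    by (auto intro!: M.integrable_bounded_comp[where f="indicator S" and B=1]
        N.integrable_bounded_comp[where f="indicator S" and B=1] split: split_indicator)
  then have "(\<integral>\<omega>. - indicator S (Y \<omega>) \<partial>N) \<le> (\<integral>\<omega>. - indicator S (X \<omega>) \<partial>M :: real)"
    using \<open>pareto_down_closed S\<close>
    by (intro integral_le_of_monotone) (auto simp: pareto_down_closed_def split: split_indicator)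
  then show ?thesis
    by (simp add: M.integral_indicator_comp N.integral_indicator_comp)
qed

lemma fsd_vec: "fsd_vec M X N Y"
  unfolding fsd_vec_def vcdf_def
  using prob_le_of_down_closed[OF _ pareto_down_closed_orthant]
  by (simp add: pareto_le_def)

lemma marginal_rcdf_le: "rcdf M (\<lambda>\<omega>. X \<omega> $ i) t \<le> rcdf N (\<lambda>\<omega>. Y \<omega> $ i) t"
  unfolding rcdf_def
  using prob_le_of_down_closed[OF _ pareto_down_closed_halfspace] by simp

lemma integrable_arctan_component:
  "integrable M (\<lambda>\<omega>. arctan (X \<omega> $ i))" "integrable N (\<lambda>\<omega>. arctan (Y \<omega> $ i))"
  using M.integrable_bounded_comp[OF borel_measurable_arctan abs_arctan_le_pi measurable_component(1)]
    N.integrable_bounded_comp[OF borel_measurable_arctan abs_arctan_le_pi measurable_component(2)] .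

lemma ex_marginal_arctan_less:
  "\<exists>i. (\<integral>\<omega>. arctan (Y \<omega> $ i) \<partial>N) < (\<integral>\<omega>. arctan (X \<omega> $ i) \<partial>M)"
proof (rule ccontr)
  assume "\<not> ?thesis"
  then have "(\<Sum>i\<in>UNIV. \<integral>\<omega>. arctan (X \<omega> $ i) \<partial>M) \<le> (\<Sum>i\<in>UNIV. \<integral>\<omega>. arctan (Y \<omega> $ i) \<partial>N)"
    by (intro sum_mono) (simp add: not_less)
  moreover have "(\<integral>\<omega>. arctan_sum (Y \<omega>) \<partial>N) < (\<integral>\<omega>. arctan_sum (X \<omega>) \<partial>M)"
    using expectation_less[OF strictly_incr_arctan_sum integrable_arctan_sum] .
  ultimately show False
    by (simp add: arctan_sum_def Bochner_Integration.integral_sum integrable_arctan_component)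
qed

lemma dist_dom: "dist_dom M X N Y"
proof -
  obtain i where "(\<integral>\<omega>. arctan (Y \<omega> $ i) \<partial>N) < (\<integral>\<omega>. arctan (X \<omega> $ i) \<partial>M)"
    using ex_marginal_arctan_less by blast
  then have "strict_fsd_real M (\<lambda>\<omega>. X \<omega> $ i) N (\<lambda>\<omega>. Y \<omega> $ i)"
    by (intro strict_fsd_realI[where f=arctan] marginal_rcdf_le M.prob_space_axioms N.prob_space_axioms)
      (simp_all add: measurable_component)
  then show ?thesis
    unfolding dist_dom_def using fsd_vec by blast
qed

end

theorem theorem3p1:
  fixes M :: "'a measure" and N :: "'b measure"
    and X :: "'a \<Rightarrow> real^'d" and Y :: "'b \<Rightarrow> real^'d"
  assumes "prob_space M" and "prob_space N"
    and "X \<in> borel_measurable M" and "Y \<in> borel_measurable N"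
    and "\<And>u. strictly_incr u \<Longrightarrow> integrable M (\<lambda>\<omega>. u (X \<omega>)) \<Longrightarrow>
               integrable N (\<lambda>\<omega>. u (Y \<omega>)) \<Longrightarrow>
               (\<integral>\<omega>. u (X \<omega>) \<partial>M) > (\<integral>\<omega>. u (Y \<omega>) \<partial>N)"
  shows "dist_dom M X N Y"
proof -
  interpret expected_utility_dominance M N X Y
    using assms by (simp add: expected_utility_dominance_def expected_utility_dominance_axioms_def)
  show ?thesis by (rule dist_dom)
qed

end
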